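(* Let $n$ be even, and let $\mathbf{X}=\{X_{rj}:r,j=1,\dots,n\}$ be the switch variables of the standard lightbulb process, with $X_j=(\sum_{r=1}^nX_{rj})\bmod 2$ and $X=\sum_jX_j$. For each $i=1,\dots,n$ construct $\mathbf{X}^i$ as follows. Let $J^i$ have conditional distribution, given $\mathbf{X}$, uniform on $\{j: X_{n/2,j}=1-X_{n/2,i}\}$. If $X_i=1$ set $\mathbf{X}^i=\mathbf{X}$. Otherwise let $\mathbf{X}^i=\{X^i_{rj}\}$ with $X^i_{rj}=X_{rj}$ for $r\ne n/2$; $X^i_{n/2,j}=X_{n/2,j}$ for $j\notin\{i,J^i\}$; $X^i_{n/2,i}=X_{n/2,J^i}$; $X^i_{n/2,J^i}=X_{n/2,i}$ (i.e. the stage $n/2$ switch variables of bulbs $i$ and $J^i$ are interchanged). Let $X^i_j=(\sum_{r=1}^nX^i_{rj})\bmod 2$ and $X^i=\sum_{j=1}^nX^i_j$. Let $I$ be uniform on $\{1,\dots,n\}$, independent of all other variables. Then $X^s=X^I$ has the $X$-size bias distribution, and $$X^s-X=2\,\mathbf{1}_{\{X_I=0,\,X_{J^I}=0\}}\quad\text{and}\quad X\le X^s\le X+2.$$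
   Context: Standard lightbulb process: $n$ bulbs, all initially off, $n$ stages; at stage $r=1,\dots,n$ a uniformly random subset of exactly $r$ bulbs is toggled, independently across stages. The switch variable $X_{rj}\in\{0,1\}$ is $1$ iff bulb $j$ is toggled at stage $r$; thus $P(X_{rj}=e_{rj}\ \forall r,j)=\prod_{r=1}^n\binom{n}{r}^{-1}$ if $\sum_je_{rj}=r$ for all $r$, and $0$ otherwise. A random variable $X^s$ has the $X$-size bias distribution if $E[Xg(X)]=E[X]\,E[g(X^s)]$ for all bounded continuous $g$. *)

theory Defs
  imports "HOL-Probability.Probability"
begin

text \<open>Stage r (1..n) toggles a uniformly random r-subset of the bulbs {1..n},
  independently across stages.  S r is the set of bulbs toggled at stage r.\<close>
definition stage_sets_pmf :: "nat \<Rightarrow> (nat \<Rightarrow> nat set) pmf" where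
  "stage_sets_pmf n =
     Pi_pmf {1..n} {} (\<lambda>r. pmf_of_set {A. A \<subseteq> {1..n} \<and> card A = r})"

text \<open>Switch variables: sw r j = (X_{rj} = 1).\<close>
definition switch_of :: "(nat \<Rightarrow> nat set) \<Rightarrow> nat \<Rightarrow> nat \<Rightarrow> bool" where
  "switch_of S r j = (j \<in> S r)"

definition bulb :: "nat \<Rightarrow> (nat \<Rightarrow> nat \<Rightarrow> bool) \<Rightarrow> nat \<Rightarrow> nat" where
  "bulb n sw j = (\<Sum>r=1..n. if sw r j then 1 else 0) mod 2"

definition total :: "nat \<Rightarrow> (nat \<Rightarrow> nat \<Rightarrow> bool) \<Rightarrow> nat" where
  "total n sw = (\<Sum>j=1..n. bulb n sw j)"

definition swap_stage :: "nat \<Rightarrow> nat \<Rightarrow> nat \<Rightarrow> (nat \<Rightarrow> nat \<Rightarrow> bool) \<Rightarrow> (nat \<Rightarrow> nat \<Rightarrow> bool)" where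
  "swap_stage m i J sw = (\<lambda>r j. if r = m then
       (if j = i then sw r J else if j = J then sw r i else sw r j) else sw r j)"

definition sb_config :: "nat \<Rightarrow> (nat \<Rightarrow> nat \<Rightarrow> bool) \<Rightarrow> nat \<Rightarrow> nat \<Rightarrow> (nat \<Rightarrow> nat \<Rightarrow> bool)" where
  "sb_config n sw i J = (if bulb n sw i = 1 then sw else swap_stage (n div 2) i J sw)"

definition coupling_pmf :: "nat \<Rightarrow> ((nat \<Rightarrow> nat \<Rightarrow> bool) \<times> nat \<times> nat) pmf" where
  "coupling_pmf n =
     do { S \<leftarrow> stage_sets_pmf n;
          I \<leftarrow> pmf_of_set {1..n};
          J \<leftarrow> pmf_of_set {j \<in> {1..n}. switch_of S (n div 2) j \<noteq> switch_of S (n div 2) I};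
          return_pmf (switch_of S, I, J) }"

end

theory Submission
  imports Defs "HOL-Combinatorics.Transposition"
begin

text \<open>The stage process is uniform on its support. Fix a bulb \<open>i\<close> and call \<open>J\<close> a partner of
  \<open>i\<close> if their stage-\<open>n/2\<close> switches differ; every configuration has exactly \<open>n/2\<close> partners.
  Interchanging these two switches toggles exactly the bulbs \<open>i\<close> and \<open>J\<close>, so it is an
  involution on pairs (configuration, partner) exchanging \<open>X\<^sub>i = 0\<close> with \<open>X\<^sub>i = 1\<close>.
  As \<open>X\<^sup>i = X\<close> when \<open>X\<^sub>i = 1\<close>, this gives \<open>E g(X\<^sup>i) = 2 E[X\<^sub>i g(X)]\<close>; averaging over
  \<open>i\<close> yields \<open>E g(X\<^sup>s) = (2/n) E[X g(X)]\<close>, and \<open>g = 1\<close> gives \<open>E X = n/2\<close>.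
  The swap changes \<open>X\<close> by 2 when both bulbs were off and by 0 otherwise.\<close>

lemma pmf_eq_pmf_of_set_set_pmf:
  assumes "finite (set_pmf p)" and "\<And>x y. x \<in> set_pmf p \<Longrightarrow> y \<in> set_pmf p \<Longrightarrow> pmf p x = pmf p y"
  shows "p = pmf_of_set (set_pmf p)"
proof (rule pmf_eqI)
  obtain x0 where x0: "x0 \<in> set_pmf p" using set_pmf_not_empty[of p] by blast
  have "real (card (set_pmf p)) * pmf p x0 = 1"
    using sum_pmf_eq_1[OF assms(1) order_refl] assms(2)[OF _ x0] by simp
  then show "pmf p x = pmf (pmf_of_set (set_pmf p)) x" for x
    using assms(2)[OF _ x0, of x] x0 assms(1)
    by (cases "x \<in> set_pmf p") (auto simp: set_pmf_not_empty set_pmf_iff field_simps)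
qed

definition stage_configs :: "nat \<Rightarrow> (nat \<Rightarrow> nat set) set" where
  "stage_configs n = PiE_dflt {1..n} {} (\<lambda>r. {A. A \<subseteq> {1..n} \<and> card A = r})"

lemma stage_configs_iff:
  "S \<in> stage_configs n \<longleftrightarrow>
     (\<forall>r \<in> {1..n}. S r \<subseteq> {1..n} \<and> card (S r) = r) \<and> (\<forall>r. r \<notin> {1..n} \<longrightarrow> S r = {})"
  unfolding stage_configs_def PiE_dflt_def by auto

lemma finite_subsets_of_card: "finite {A. A \<subseteq> {1..n::nat} \<and> card A = r}"
  by (rule finite_subset[of _ "Pow {1..n}"]) auto

lemma subsets_of_card_nonempty: "r \<le> n \<Longrightarrow> {A. A \<subseteq> {1..n::nat} \<and> card A = r} \<noteq> {}"
  by (metis (mono_tags, lifting) atLeastatMost_subset_iff card_atLeastAtMost diff_Suc_1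
      empty_iff mem_Collect_eq order_refl)

lemma finite_stage_configs: "finite (stage_configs n)"
  unfolding stage_configs_def by (intro finite_PiE_dflt) (auto simp: finite_subsets_of_card)

lemma set_pmf_of_subsets_of_card:
  "r \<le> n \<Longrightarrow> set_pmf (pmf_of_set {A. A \<subseteq> {1..n::nat} \<and> card A = r}) = {A. A \<subseteq> {1..n} \<and> card A = r}"
  by (intro set_pmf_of_set subsets_of_card_nonempty finite_subsets_of_card)

lemma pmf_of_subsets_of_card:
  "r \<le> n \<Longrightarrow> A \<subseteq> {1..n::nat} \<Longrightarrow> card A = r \<Longrightarrow>
    pmf (pmf_of_set {A. A \<subseteq> {1..n} \<and> card A = r}) A = 1 / real (card {A. A \<subseteq> {1..n} \<and> card A = r})"
  by (subst pmf_of_set[OF subsets_of_card_nonempty finite_subsets_of_card]) auto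

lemma set_pmf_stage_sets_pmf: "set_pmf (stage_sets_pmf n) = stage_configs n"
  unfolding stage_sets_pmf_def stage_configs_def set_Pi_pmf[OF finite_atLeastAtMost] PiE_dflt_def
  using set_pmf_of_subsets_of_card by auto

lemma stage_configs_nonempty: "stage_configs n \<noteq> {}"
  using set_pmf_not_empty[of "stage_sets_pmf n"] by (simp add: set_pmf_stage_sets_pmf)

lemma stage_sets_pmf_eq_pmf_of_set: "stage_sets_pmf n = pmf_of_set (stage_configs n)"
proof -
  have "pmf (stage_sets_pmf n) S = (\<Prod>r\<in>{1..n}. 1 / real (card {A. A \<subseteq> {1..n} \<and> card A = r}))"
    if "S \<in> stage_configs n" for S
    using that unfolding stage_sets_pmf_def pmf_Pi[OF finite_atLeastAtMost] stage_configs_iff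
    using pmf_of_subsets_of_card by (auto intro!: prod.cong)
  then show ?thesis
    using pmf_eq_pmf_of_set_set_pmf[of "stage_sets_pmf n"]
    by (simp add: set_pmf_stage_sets_pmf finite_stage_configs)
qed

definition partners :: "nat \<Rightarrow> nat \<Rightarrow> (nat \<Rightarrow> nat set) \<Rightarrow> nat \<Rightarrow> nat set" where
  "partners m n S i = {j \<in> {1..n}. switch_of S m j \<noteq> switch_of S m i}"

lemma card_partners_half:
  assumes "even n" and "n > 0" and "S \<in> stage_configs n"
  shows "card (partners (n div 2) n S i) = n div 2"
proof -
  have "S (n div 2) \<subseteq> {1..n}" and "card (S (n div 2)) = n div 2"
    using assms unfolding stage_configs_iff by auto
  moreover have "partners (n div 2) n S i =
      (if i \<in> S (n div 2) then {1..n} - S (n div 2) else S (n div 2) \<inter> {1..n})"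
    by (auto simp: partners_def switch_of_def)
  ultimately show ?thesis
    using \<open>even n\<close> by (auto simp: card_Diff_subset Int_absorb2 finite_subset)
qed

definition swap_stage_sets :: "nat \<Rightarrow> nat \<Rightarrow> nat \<Rightarrow> (nat \<Rightarrow> nat set) \<Rightarrow> nat \<Rightarrow> nat set" where
  "swap_stage_sets m i J S = S(m := Transposition.transpose i J ` S m)"

lemma switch_of_swap_stage_sets:
  "switch_of (swap_stage_sets m i J S) = swap_stage m i J (switch_of S)"
  by (auto simp: fun_eq_iff swap_stage_sets_def swap_stage_def switch_of_def
      in_transpose_image_iff Transposition.transpose_def)

lemma swap_stage_sets_involutory [simp]: "swap_stage_sets m i J (swap_stage_sets m i J S) = S"
  by (auto simp: fun_eq_iff swap_stage_sets_def image_comp)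

lemma swap_stage_sets_mem_stage_configs:
  assumes "S \<in> stage_configs n" and "i \<in> {1..n}" and "J \<in> {1..n}"
  shows "swap_stage_sets m i J S \<in> stage_configs n"
proof -
  have "card (Transposition.transpose i J ` S m) = card (S m)"
    by (simp add: card_image)
  moreover have "Transposition.transpose i J ` S m \<subseteq> {1..n}" if "S m \<subseteq> {1..n}"
    using that assms(2,3) by (auto simp: Transposition.transpose_def)
  ultimately show ?thesis
    using assms(1) unfolding stage_configs_iff swap_stage_sets_def by auto
qed

lemma bulb_split_stage:
  assumes "m \<in> {1..n}"
  shows "bulb n sw j = ((\<Sum>r\<in>{1..n} - {m}. if sw r j then 1 else 0) + (if sw m j then 1 else 0)) mod 2"
  unfolding bulb_def by (subst sum.remove[OF finite_atLeastAtMost assms]) (simp only: add.commute)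

lemma bulb_01: "bulb n sw j = 0 \<or> bulb n sw j = 1"
  unfolding bulb_def by presburger

lemma bulb_toggle_one_switch:
  assumes "m \<in> {1..n}" and "\<And>r. r \<noteq> m \<Longrightarrow> sw' r j = sw r j" and "sw' m j \<noteq> sw m j"
  shows "bulb n sw' j = 1 - bulb n sw j"
proof -
  have "(\<Sum>r\<in>{1..n} - {m}. if sw' r j then 1 else 0) = (\<Sum>r\<in>{1..n} - {m}. if sw r j then 1 else (0::nat))"
    using assms(2) by (intro sum.cong) auto
  then show ?thesis
    unfolding bulb_split_stage[OF assms(1)] using assms(3) by (cases "sw m j") (simp_all, presburger+)
qed

lemma bulb_swap_stage:
  assumes "m \<in> {1..n}" and "sw m i \<noteq> sw m J"
  shows "bulb n (swap_stage m i J sw) j = (if j = i \<or> j = J then 1 - bulb n sw j else bulb n sw j)"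
proof (cases "j = i \<or> j = J")
  case True
  have "swap_stage m i J sw m j \<noteq> sw m j"
    using True assms(2) by (auto simp: swap_stage_def)
  then have "bulb n (swap_stage m i J sw) j = 1 - bulb n sw j"
    by (intro bulb_toggle_one_switch[OF assms(1)]) (simp_all add: swap_stage_def)
  with True show ?thesis by simp
next
  case False
  then show ?thesis
    unfolding bulb_def by (auto intro!: arg_cong[where f = "\<lambda>x. x mod 2"] sum.cong simp: swap_stage_def)
qed

lemma total_swap_stage:
  assumes "m \<in> {1..n}" and "sw m i \<noteq> sw m J" and "i \<in> {1..n}" and "J \<in> {1..n}"
  shows "total n (swap_stage m i J sw) + bulb n sw i + bulb n sw J
       = total n sw + (1 - bulb n sw i) + (1 - bulb n sw J)"
proof -
  have "i \<noteq> J" using assms(2) by auto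
  have split: "total n sw' = bulb n sw' i + bulb n sw' J + (\<Sum>j\<in>{1..n} - {i, J}. bulb n sw' j)" for sw'
    unfolding total_def using assms(3,4) \<open>i \<noteq> J\<close> by (subst sum.subset_diff[of "{i, J}"]) auto
  have "(\<Sum>j\<in>{1..n} - {i, J}. bulb n (swap_stage m i J sw) j) = (\<Sum>j\<in>{1..n} - {i, J}. bulb n sw j)"
    by (intro sum.cong) (auto simp: bulb_swap_stage[of m n sw i J, OF assms(1,2)])
  then show ?thesis
    using split[of sw] split[of "swap_stage m i J sw"] bulb_swap_stage[of m n sw i J, OF assms(1,2)]
    by simp
qed

lemma total_sb_config:
  assumes "even n" and "n > 0" and "sw (n div 2) i \<noteq> sw (n div 2) J" and "i \<in> {1..n}" and "J \<in> {1..n}"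
  shows "total n (sb_config n sw i J)
       = total n sw + (if bulb n sw i = 0 \<and> bulb n sw J = 0 then 2 else 0)"
proof -
  have "n div 2 \<in> {1..n}" using assms(1,2) by auto
  from total_swap_stage[of "n div 2" n sw i J, OF this assms(3-5)] show ?thesis
    using bulb_01[of n sw i] bulb_01[of n sw J] by (auto simp: sb_config_def)
qed

lemma mem_partners_swap_stage_sets:
  "J \<in> partners m n S i \<Longrightarrow> J \<in> partners m n (swap_stage_sets m i J S) i"
  by (auto simp: partners_def switch_of_swap_stage_sets swap_stage_def)

lemma bij_betw_swap_stage_sets:
  assumes "m \<in> {1..n}" and "i \<in> {1..n}"
  shows "bij_betw (\<lambda>(S, J). (swap_stage_sets m i J S, J))
           (SIGMA S:{S \<in> stage_configs n. bulb n (switch_of S) i = 0}. partners m n S i)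
           (SIGMA S:{S \<in> stage_configs n. bulb n (switch_of S) i = 1}. partners m n S i)"
proof -
  have maps_to: "(swap_stage_sets m i J S, J)
      \<in> (SIGMA S:{S \<in> stage_configs n. bulb n (switch_of S) i = 1 - b}. partners m n S i)"
    if "S \<in> stage_configs n" "bulb n (switch_of S) i = b" "J \<in> partners m n S i" for S J b
  proof -
    have "J \<in> {1..n}" and "switch_of S m i \<noteq> switch_of S m J"
      using that(3) by (auto simp: partners_def)
    then show ?thesis
      using that assms swap_stage_sets_mem_stage_configs mem_partners_swap_stage_sets
      by (auto simp: switch_of_swap_stage_sets bulb_swap_stage)
  qed
  show ?thesis
    by (rule bij_betw_byWitness[where f' = "\<lambda>(S, J). (swap_stage_sets m i J S, J)"])
      (use maps_to[where b = 0] maps_to[where b = 1] in auto)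
qed

lemma sum_partners_sb_config:
  fixes g :: "nat \<Rightarrow> real"
  assumes "even n" and "n > 0" and "i \<in> {1..n}"
  shows "(\<Sum>S\<in>stage_configs n. \<Sum>J\<in>partners (n div 2) n S i. g (total n (sb_config n (switch_of S) i J)))
       = n * (\<Sum>S\<in>stage_configs n. if bulb n (switch_of S) i = 1 then g (total n (switch_of S)) else 0)"
proof -
  define m where "m = n div 2"
  have m_range: "m \<in> {1..n}" and "real n = 2 * real m"
    using assms(1,2) by (auto simp: m_def)
  define \<Omega>\<^sub>0 where "\<Omega>\<^sub>0 = {S \<in> stage_configs n. bulb n (switch_of S) i = 0}"
  define \<Omega>\<^sub>1 where "\<Omega>\<^sub>1 = {S \<in> stage_configs n. bulb n (switch_of S) i = 1}"
  define G where "G = (\<lambda>S J. g (total n (sb_config n (switch_of S) i J)))"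
  define H where "H = (\<lambda>S. g (total n (switch_of S)))"
  have fin: "finite \<Omega>\<^sub>0" "finite \<Omega>\<^sub>1" "\<And>S. finite (partners m n S i)"
    using finite_stage_configs by (auto simp: \<Omega>\<^sub>0_def \<Omega>\<^sub>1_def partners_def)
  have "stage_configs n = \<Omega>\<^sub>1 \<union> \<Omega>\<^sub>0" and "\<Omega>\<^sub>1 \<inter> \<Omega>\<^sub>0 = {}"
    unfolding \<Omega>\<^sub>0_def \<Omega>\<^sub>1_def using bulb_01 by blast auto
  then have "(\<Sum>S\<in>stage_configs n. \<Sum>J\<in>partners m n S i. G S J)
      = (\<Sum>S\<in>\<Omega>\<^sub>1. \<Sum>J\<in>partners m n S i. G S J) + (\<Sum>S\<in>\<Omega>\<^sub>0. \<Sum>J\<in>partners m n S i. G S J)"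
    by (simp add: sum.union_disjoint fin)
  also have "(\<Sum>S\<in>\<Omega>\<^sub>1. \<Sum>J\<in>partners m n S i. G S J) = (\<Sum>S\<in>\<Omega>\<^sub>1. \<Sum>J\<in>partners m n S i. H S)"
    by (simp add: G_def H_def \<Omega>\<^sub>1_def sb_config_def)
  also have "(\<Sum>S\<in>\<Omega>\<^sub>0. \<Sum>J\<in>partners m n S i. G S J)
      = (\<Sum>S\<in>\<Omega>\<^sub>0. \<Sum>J\<in>partners m n S i. H (swap_stage_sets m i J S))"
    by (intro sum.cong) (auto simp: G_def H_def \<Omega>\<^sub>0_def sb_config_def switch_of_swap_stage_sets m_def)
  also have "\<dots> = (\<Sum>(S, J)\<in>(SIGMA S:\<Omega>\<^sub>0. partners m n S i). H (swap_stage_sets m i J S))"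
    by (rule sum.Sigma) (use fin in auto)
  also have "\<dots> = (\<Sum>(S, J)\<in>(SIGMA S:\<Omega>\<^sub>1. partners m n S i). H S)"
    using sum.reindex_bij_betw[OF bij_betw_swap_stage_sets[OF m_range assms(3)], of "\<lambda>(S, J). H S"]
    by (simp add: split_def \<Omega>\<^sub>0_def \<Omega>\<^sub>1_def)
  also have "\<dots> = (\<Sum>S\<in>\<Omega>\<^sub>1. \<Sum>J\<in>partners m n S i. H S)"
    by (rule sum.Sigma[symmetric]) (use fin in auto)
  finally have "(\<Sum>S\<in>stage_configs n. \<Sum>J\<in>partners m n S i. G S J) = n * (\<Sum>S\<in>\<Omega>\<^sub>1. H S)"
    using card_partners_half[OF assms(1,2)] \<open>real n = 2 * real m\<close>
    by (simp add: \<Omega>\<^sub>1_def sum_distrib_left mult.assoc flip: m_def)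
  then show ?thesis
    by (simp add: G_def H_def \<Omega>\<^sub>1_def m_def sum.inter_filter[OF finite_stage_configs])
qed

lemma finite_partners: "finite (partners m n S i)"
  by (simp add: partners_def)

lemma partners_half_nonempty:
  "even n \<Longrightarrow> n > 0 \<Longrightarrow> S \<in> stage_configs n \<Longrightarrow> partners (n div 2) n S i \<noteq> {}"
  using card_partners_half[of n S i] by fastforce

lemma coupling_pmf_eq:
  "coupling_pmf n = stage_sets_pmf n \<bind> (\<lambda>S. pmf_of_set {1..n} \<bind>
     (\<lambda>I. pmf_of_set (partners (n div 2) n S I) \<bind> (\<lambda>J. return_pmf (switch_of S, I, J))))"
  by (simp add: coupling_pmf_def partners_def)

lemma set_pmf_coupling_pmf:
  assumes "even n" and "n > 0" and "(sw, I, J) \<in> set_pmf (coupling_pmf n)"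
  obtains S where "S \<in> stage_configs n" "sw = switch_of S" "I \<in> {1..n}" "J \<in> partners (n div 2) n S I"
  using assms
  by (auto simp: coupling_pmf_eq set_pmf_stage_sets_pmf partners_half_nonempty finite_partners)

lemma expectation_coupling_pmf:
  fixes h :: "(nat \<Rightarrow> nat \<Rightarrow> bool) \<times> nat \<times> nat \<Rightarrow> real"
  assumes "even n" and "n > 0"
  shows "measure_pmf.expectation (coupling_pmf n) h
       = (\<Sum>S\<in>stage_configs n. \<Sum>I=1..n. \<Sum>J\<in>partners (n div 2) n S I. h (switch_of S, I, J))
         / (card (stage_configs n) * n * (n div 2))"
proof -
  let ?P = "\<lambda>S I. partners (n div 2) n S I"
  have inner: "measure_pmf.expectation (pmf_of_set (?P S I) \<bind> (\<lambda>J. return_pmf (switch_of S, I, J))) h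
      = (\<Sum>J\<in>?P S I. h (switch_of S, I, J)) / (n div 2)" if "S \<in> stage_configs n" for S I
    using that assms card_partners_half[of n S I]
    by (subst pmf_expectation_bind_pmf_of_set)
      (auto simp: partners_half_nonempty finite_partners divide_inverse mult.commute sum_distrib_left)
  have middle: "measure_pmf.expectation (pmf_of_set {1..n} \<bind>
        (\<lambda>I. pmf_of_set (?P S I) \<bind> (\<lambda>J. return_pmf (switch_of S, I, J)))) h
      = (\<Sum>I=1..n. \<Sum>J\<in>?P S I. h (switch_of S, I, J)) / (n * (n div 2))" if "S \<in> stage_configs n" for S
  proof -
    have "measure_pmf.expectation (pmf_of_set {1..n} \<bind>
          (\<lambda>I. pmf_of_set (?P S I) \<bind> (\<lambda>J. return_pmf (switch_of S, I, J)))) h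
        = (\<Sum>I=1..n. (\<Sum>J\<in>?P S I. h (switch_of S, I, J)) / (n div 2) / n)"
      using that assms
      by (subst pmf_expectation_bind_pmf_of_set)
        (auto intro!: sum.cong simp: inner set_bind_pmf finite_partners partners_half_nonempty field_simps)
    then show ?thesis
      by (simp add: sum_divide_distrib mult.commute)
  qed
  have "measure_pmf.expectation (coupling_pmf n) h
      = (\<Sum>S\<in>stage_configs n. measure_pmf.expectation (pmf_of_set {1..n} \<bind>
          (\<lambda>I. pmf_of_set (?P S I) \<bind> (\<lambda>J. return_pmf (switch_of S, I, J)))) h
          /\<^sub>R real (card (stage_configs n)))"
    unfolding coupling_pmf_eq stage_sets_pmf_eq_pmf_of_set
    by (rule pmf_expectation_bind_pmf_of_set)
      (use stage_configs_nonempty finite_stage_configs assms in \<open>auto simp: set_bind_pmf partners_half_nonempty finite_partners\<close>)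
  also have "\<dots> = (\<Sum>S\<in>stage_configs n.
      (\<Sum>I=1..n. \<Sum>J\<in>?P S I. h (switch_of S, I, J)) / (n * (n div 2)) / card (stage_configs n))"
    by (intro sum.cong refl) (subst middle, simp_all add: divide_inverse_commute)
  finally show ?thesis
    by (simp add: sum_divide_distrib ac_simps)
qed

lemma expectation_coupling_pmf_switches:
  fixes f :: "(nat \<Rightarrow> nat \<Rightarrow> bool) \<Rightarrow> real"
  assumes "even n" and "n > 0"
  shows "measure_pmf.expectation (coupling_pmf n) (\<lambda>(sw, I, J). f sw)
       = (\<Sum>S\<in>stage_configs n. f (switch_of S)) / card (stage_configs n)"
proof -
  have "(\<Sum>I=1..n. \<Sum>J\<in>partners (n div 2) n S I. f (switch_of S)) = n * (n div 2) * f (switch_of S)"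
    if "S \<in> stage_configs n" for S
    using card_partners_half[OF assms that] by simp
  moreover have "n div 2 \<noteq> 0"
    using assms by auto
  ultimately show ?thesis
    using assms by (simp add: expectation_coupling_pmf sum_divide_distrib)
qed

lemma sum_bulb_eq_1:
  "(\<Sum>j=1..n. if bulb n sw j = 1 then c else 0) = real (total n sw) * c"
proof -
  have "real (bulb n sw j) * c = (if bulb n sw j = 1 then c else 0)" for j
    using bulb_01[of n sw j] by auto
  then show ?thesis
    unfolding total_def of_nat_sum sum_distrib_right by simp
qed

lemma sum_sb_config_total:
  fixes g :: "nat \<Rightarrow> real"
  assumes "even n" and "n > 0"
  shows "(\<Sum>S\<in>stage_configs n. \<Sum>I=1..n. \<Sum>J\<in>partners (n div 2) n S I.
            g (total n (sb_config n (switch_of S) I J)))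
       = n * (\<Sum>S\<in>stage_configs n. real (total n (switch_of S)) * g (total n (switch_of S)))"
proof -
  have "(\<Sum>S\<in>stage_configs n. \<Sum>I=1..n. \<Sum>J\<in>partners (n div 2) n S I.
            g (total n (sb_config n (switch_of S) I J)))
      = (\<Sum>I=1..n. \<Sum>S\<in>stage_configs n. \<Sum>J\<in>partners (n div 2) n S I.
            g (total n (sb_config n (switch_of S) I J)))"
    by (rule sum.swap)
  also have "\<dots> = (\<Sum>I=1..n. n * (\<Sum>S\<in>stage_configs n.
      if bulb n (switch_of S) I = 1 then g (total n (switch_of S)) else 0))"
    using sum_partners_sb_config[OF assms] by simp
  also have "\<dots> = n * (\<Sum>S\<in>stage_configs n. \<Sum>I=1..n.
      if bulb n (switch_of S) I = 1 then g (total n (switch_of S)) else 0)"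
    unfolding sum_distrib_left by (rule sum.swap)
  also have "\<dots> = n * (\<Sum>S\<in>stage_configs n. real (total n (switch_of S)) * g (total n (switch_of S)))"
    by (simp only: sum_bulb_eq_1)
  finally show ?thesis .
qed

lemma sum_total_stage_configs:
  assumes "even n" and "n > 0"
  shows "(\<Sum>S\<in>stage_configs n. real (total n (switch_of S))) = card (stage_configs n) * (n div 2)"
proof -
  have "n * (\<Sum>S\<in>stage_configs n. real (total n (switch_of S)))
      = (\<Sum>S\<in>stage_configs n. \<Sum>I=1..n. real (card (partners (n div 2) n S I)))"
    using sum_sb_config_total[OF assms, of "\<lambda>_. 1"] by simp
  also have "\<dots> = n * (card (stage_configs n) * (n div 2))"
    using card_partners_half[OF assms] by simp
  finally show ?thesis
    using assms(2) by simp
qed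

lemma coupling_pmf_size_bias:
  fixes g :: "real \<Rightarrow> real"
  assumes "even n" and "n > 0"
  shows "measure_pmf.expectation (coupling_pmf n) (\<lambda>(sw, I, J). real (total n sw) * g (real (total n sw)))
       = measure_pmf.expectation (coupling_pmf n) (\<lambda>(sw, I, J). real (total n sw))
       * measure_pmf.expectation (coupling_pmf n) (\<lambda>(sw, I, J). g (real (total n (sb_config n sw I J))))"
proof -
  let ?N = "real (card (stage_configs n))" and ?m = "real (n div 2)"
  let ?A = "\<Sum>S\<in>stage_configs n. real (total n (switch_of S)) * g (real (total n (switch_of S)))"
  have "?N > 0" and "?m > 0"
    using assms finite_stage_configs stage_configs_nonempty by (auto simp: card_gt_0_iff)
  moreover have "measure_pmf.expectation (coupling_pmf n) (\<lambda>(sw, I, J). real (total n sw)) = ?m"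
    using \<open>?N > 0\<close> by (simp add: expectation_coupling_pmf_switches[OF assms] sum_total_stage_configs[OF assms])
  moreover have "measure_pmf.expectation (coupling_pmf n) (\<lambda>(sw, I, J). g (real (total n (sb_config n sw I J))))
      = n * ?A / (?N * n * ?m)"
    using sum_sb_config_total[OF assms, of "\<lambda>k. g (real k)"]
    by (simp add: expectation_coupling_pmf[OF assms] case_prod_beta)
  ultimately show ?thesis
    using assms by (simp add: expectation_coupling_pmf_switches[OF assms])
qed

lemma total_sb_config_coupling_pmf:
  assumes "even n" and "n > 0" and "(sw, I, J) \<in> set_pmf (coupling_pmf n)"
  shows "total n (sb_config n sw I J) = total n sw + (if bulb n sw I = 0 \<and> bulb n sw J = 0 then 2 else 0)"
proof -
  obtain S where "sw = switch_of S" "I \<in> {1..n}" "J \<in> partners (n div 2) n S I"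
    using set_pmf_coupling_pmf[OF assms] by blast
  then show ?thesis
    by (intro total_sb_config[OF assms(1,2)]) (auto simp: partners_def)
qed

theorem theorem3p1:
  fixes n :: nat
  assumes "even n" and "n > 0"
  shows "(\<forall>g :: real \<Rightarrow> real. bounded (range g) \<longrightarrow> continuous_on UNIV g \<longrightarrow>
            measure_pmf.expectation (coupling_pmf n)
              (\<lambda>(sw, I, J). real (total n sw) * g (real (total n sw)))
          = measure_pmf.expectation (coupling_pmf n) (\<lambda>(sw, I, J). real (total n sw))
            * measure_pmf.expectation (coupling_pmf n)
                (\<lambda>(sw, I, J). g (real (total n (sb_config n sw I J)))))
       \<and> (\<forall>(sw, I, J) \<in> set_pmf (coupling_pmf n).
            real (total n (sb_config n sw I J)) - real (total n sw)
              = 2 * (if bulb n sw I = 0 \<and> bulb n sw J = 0 then 1 else 0)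
            \<and> total n sw \<le> total n (sb_config n sw I J)
            \<and> total n (sb_config n sw I J) \<le> total n sw + 2)"
  using coupling_pmf_size_bias[OF assms] total_sb_config_coupling_pmf[OF assms] by auto

end
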